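(* Let $U\subseteq\mathbb{E}^s$ be a Pseudo-Riemannian affine homogeneous domain and let $G\le \mathrm{Isom}(U)$ be a subgroup having an open orbit in $\mathbb{R}^n$. Then the centraliser $Z$ of $G$ in $E(s)$ is a connected unipotent group which is nilpotent of class at most two, and every $g\in Z$ satisfies $(g-I_{n+1})^2=0$.
   Context: $\mathbb{E}^s=(\mathbb{R}^n,\langle\cdot,\cdot\rangle_s)$ is pseudo-Euclidean space with a scalar product of signature $s$, and $E(s)=\mathbb{R}^n\rtimes O(s)$ its isometry group, viewed in $\mathrm{Aff}(n)\subset GL(n+1,\mathbb{R})$ via $\begin{pmatrix} g&t\\0&1\end{pmatrix}$. A Pseudo-Riemannian affine homogeneous domain is a connected open $U\subseteq\mathbb{R}^n$ such that $\mathrm{Isom}(U)=\{A\in E(s):A(U)=U\}$ acts transitively on $U$. $I_{n+1}$ is the identity matrix. *)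

theory Defs
  imports "HOL-Analysis.Analysis"
begin

text \<open>Pseudo-Euclidean space: R^n (index type 'n) with the scalar product
  <x,y>_S = x^T S y, S a symmetric invertible matrix (signature arbitrary).\<close>

definition pseudo_scalar_product :: "real^'n^'n \<Rightarrow> bool" where
  "pseudo_scalar_product S \<longleftrightarrow> transpose S = S \<and> invertible S"

definition orth_group :: "real^'n^'n \<Rightarrow> (real^'n^'n) set" where
  "orth_group S = {g. transpose g ** S ** g = S}"

text \<open>Embedding of Aff(n) into GL(n+1): the extra coordinate is None.\<close>
definition aff_mat :: "real^'n^'n \<Rightarrow> real^'n \<Rightarrow> real^('n::finite option)^('n option)" where
  "aff_mat g t = (\<chi> i j. case i of
       Some a \<Rightarrow> (case j of Some b \<Rightarrow> g $ a $ b | None \<Rightarrow> t $ a)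
     | None \<Rightarrow> (case j of Some b \<Rightarrow> 0 | None \<Rightarrow> 1))"

definition E_group :: "real^'n^'n \<Rightarrow> (real^('n::finite option)^('n option)) set" where
  "E_group S = {aff_mat g t | g t. g \<in> orth_group S}"

definition aff_apply :: "real^('n::finite option)^('n option) \<Rightarrow> real^'n \<Rightarrow> real^'n" where
  "aff_apply A x = (\<chi> a. (\<Sum>b\<in>UNIV. A $ Some a $ Some b * x $ b) + A $ Some a $ None)"

definition Isom :: "real^'n^'n \<Rightarrow> (real^'n) set \<Rightarrow> (real^('n::finite option)^('n option)) set" where
  "Isom S U = {A \<in> E_group S. aff_apply A ` U = U}"

definition PR_affine_homogeneous_domain :: "real^'n^'n \<Rightarrow> (real^'n) set \<Rightarrow> bool" where
  "PR_affine_homogeneous_domain S U \<longleftrightarrow>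
     open U \<and> connected U \<and> U \<noteq> {} \<and>
     (\<forall>x\<in>U. \<forall>y\<in>U. \<exists>A\<in>Isom S U. aff_apply A x = y)"

definition matrix_subgroup :: "(real^'m^'m) set \<Rightarrow> (real^'m^'m) set \<Rightarrow> bool" where
  "matrix_subgroup G H \<longleftrightarrow> G \<subseteq> H \<and> mat 1 \<in> G \<and>
     (\<forall>A\<in>G. \<forall>B\<in>G. A ** B \<in> G) \<and> (\<forall>A\<in>G. invertible A \<and> matrix_inv A \<in> G)"

definition has_open_orbit :: "(real^('n::finite option)^('n option)) set \<Rightarrow> bool" where
  "has_open_orbit G \<longleftrightarrow> (\<exists>x::real^'n. open ((\<lambda>A. aff_apply A x) ` G))"

definition centraliser :: "(real^'m^'m) set \<Rightarrow> (real^'m^'m) set \<Rightarrow> (real^'m^'m) set" where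
  "centraliser G H = {A \<in> H. \<forall>B\<in>G. A ** B = B ** A}"

definition unipotent_matrix :: "real^'m^'m \<Rightarrow> bool" where
  "unipotent_matrix A \<longleftrightarrow> (\<exists>k. (((**) (A - mat 1)) ^^ k) (mat 1) = 0)"

definition unipotent_group :: "(real^'m^'m) set \<Rightarrow> bool" where
  "unipotent_group Z \<longleftrightarrow> (\<forall>A\<in>Z. unipotent_matrix A)"

definition commutator :: "real^'m^'m \<Rightarrow> real^'m^'m \<Rightarrow> real^'m^'m" where
  "commutator A B = A ** B ** matrix_inv A ** matrix_inv B"

definition nilpotent_class_le_two :: "(real^'m^'m) set \<Rightarrow> bool" where
  "nilpotent_class_le_two Z \<longleftrightarrow>
     (\<forall>A\<in>Z. \<forall>B\<in>Z. \<forall>C\<in>Z. commutator (commutator A B) C = mat 1)"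

end

theory Submission
  imports Defs
begin

text \<open>
  Let \<open>A = (h, c)\<close> centralise \<open>G\<close> and put \<open>N = h - 1\<close>.  The displacement
  \<open>y \<mapsto> Ay - y = Ny + c\<close> is \<open>G\<close>-equivariant, so its squared pseudo-length is constant on the
  open \<open>G\<close>-orbit.  Differentiating along lines through a point of the orbit shows that the
  image of \<open>N\<close> is totally isotropic and orthogonal to the displacement; together with
  \<open>h \<in> O(s)\<close> this makes \<open>N\<close> skew, whence \<open>N\<^sup>2 = 0\<close>, \<open>Nc = 0\<close>, \<open>(A - 1)\<^sup>2 = 0\<close>, and every
  \<open>1 + s(A - 1)\<close> is again an isometry commuting with \<open>G\<close>.
\<close>


lemma matrix_add_rdistrib: "((A::real^'m^'n) + B) ** C = A ** C + B ** C"
  by (vector matrix_matrix_mult_def sum.distrib[symmetric] field_simps)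

lemma matrix_diff_ldistrib: "(A::real^'m^'n) ** (B - C) = A ** B - A ** C"
  by (vector matrix_matrix_mult_def sum_subtractf[symmetric] field_simps)

lemma matrix_diff_rdistrib: "((A::real^'m^'n) - B) ** C = A ** C - B ** C"
  by (vector matrix_matrix_mult_def sum_subtractf[symmetric] field_simps)

lemma matrix_minus_left: "(- (A::real^'m^'n)) ** C = - (A ** C)"
  by (vector matrix_matrix_mult_def sum_negf[symmetric])

lemma matrix_minus_right: "(A::real^'m^'n) ** (- C) = - (A ** C)"
  by (vector matrix_matrix_mult_def sum_negf[symmetric])

lemmas matrix_ring_simps = matrix_add_ldistrib matrix_add_rdistrib matrix_diff_ldistrib
  matrix_diff_rdistrib matrix_minus_left matrix_minus_right matrix_mul_assoc

lemma matrix_inv_eqI: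
  assumes "(A::real^'m^'m) ** B = mat 1" "B ** A = mat 1"
  shows "invertible A" "matrix_inv A = B"
proof -
  show "invertible A" using assms invertible_def by blast
  have inv: "A ** matrix_inv A = mat 1 \<and> matrix_inv A ** A = mat 1"
    unfolding matrix_inv_def by (rule someI[of _ B]) (use assms in auto)
  have "B = (matrix_inv A ** A) ** B" using inv by simp
  also have "\<dots> = matrix_inv A" by (simp add: assms(1) flip: matrix_mul_assoc)
  finally show "matrix_inv A = B" by simp
qed

lemma matrix_double_eq_0: "(K::real^'m^'n) + K = 0 \<Longrightarrow> K = 0"
  by (metis scaleR_2 scaleR_eq_0_iff zero_neq_numeral)

lemma matrix_mult_zero_prefix: "(P::real^'m^'m) ** W = 0 \<Longrightarrow> M ** P ** W = 0"
proof -
  assume "P ** W = 0"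
  then have "M ** (P ** W) = 0" by simp
  then show ?thesis by (simp only: matrix_mul_assoc)
qed

lemma orthogonal_square_zero_product:
  fixes U P :: "real^'m^'m"
  assumes "U ** U = 0" "U ** P = 0" "P ** U = 0" "P ** P = 0"
  shows "(mat 1 + (U + P)) ** (mat 1 - (U - P)) = mat 1 + 2 *\<^sub>R P"
  by (simp add: matrix_add_ldistrib matrix_add_rdistrib matrix_diff_ldistrib
      matrix_diff_rdistrib assms algebra_simps scaleR_2)

text \<open>If \<open>X\<^sup>2 = Y\<^sup>2 = 0\<close> and all four products \<open>(1 \<plusminus> X)(1 \<plusminus> Y)\<close> are again of the form
  \<open>1 + V\<close> with \<open>V\<^sup>2 = 0\<close>, then \<open>X\<close> and \<open>Y\<close> anticommute: the four expanded conditions are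
  linear in \<open>XY + YX\<close>, \<open>YXY\<close>, \<open>XYX\<close>, \<open>XYXY\<close>, and a signed sum isolates \<open>XY + YX\<close>.\<close>

lemma square_zero_anticommute:
  fixes X Y :: "real^'m^'m"
  assumes x: "X ** X = 0" and y: "Y ** Y = 0"
    and pp: "(X + Y + X ** Y) ** (X + Y + X ** Y) = 0"
    and mp: "(- X + Y + (- X) ** Y) ** (- X + Y + (- X) ** Y) = 0"
    and pm: "(X - Y + X ** (- Y)) ** (X - Y + X ** (- Y)) = 0"
    and mm: "(- X - Y + (- X) ** (- Y)) ** (- X - Y + (- X) ** (- Y)) = 0"
  shows "X ** Y + Y ** X = 0"
proof -
  define K1 where "K1 = X ** Y + Y ** X"
  define K2 where "K2 = Y ** X ** Y"
  define K3 where "K3 = X ** Y ** X"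
  define K4 where "K4 = X ** Y ** X ** Y"
  have xx: "M ** X ** X = 0" and yy: "M ** Y ** Y = 0"
    for M :: "real^'m^'m" using x y by (simp_all add: matrix_mult_zero_prefix)
  have "K1 + K2 + K3 + K4 = 0" and "- K1 - K2 + K3 + K4 = 0"
    and "- K1 + K2 - K3 + K4 = 0" and "K1 - K2 - K3 + K4 = 0"
    using pp mp pm mm unfolding K1_def K2_def K3_def K4_def
    by (simp_all add: matrix_ring_simps x y xx yy algebra_simps)
  note eqs = this
  have "(K1 + K1) + (K1 + K1)
      = (K1 + K2 + K3 + K4) - (- K1 - K2 + K3 + K4) - (- K1 + K2 - K3 + K4) + (K1 - K2 - K3 + K4)"
    by (simp add: algebra_simps)
  also have "\<dots> = 0"
    by (simp only: eqs) simp
  finally have "(K1 + K1) + (K1 + K1) = 0" .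
  then have "K1 + K1 = 0" by (rule matrix_double_eq_0)
  then show ?thesis
    unfolding K1_def[symmetric] by (rule matrix_double_eq_0)
qed

text \<open>A family of matrices \<open>1 + X\<close> with \<open>X\<^sup>2 = 0\<close> which is closed under products and
  contains, with \<open>1 + X\<close>, the whole line \<open>1 + sX\<close>.  The centraliser in the main theorem
  is such a family, and all its group-theoretic properties follow from these three axioms.\<close>

locale square_zero_family =
  fixes Z :: "(real^'m^'m) set"
  assumes square_zero: "A \<in> Z \<Longrightarrow> (A - mat 1) ** (A - mat 1) = 0"
    and mult_closed: "A \<in> Z \<Longrightarrow> B \<in> Z \<Longrightarrow> A ** B \<in> Z"
    and line_closed: "A \<in> Z \<Longrightarrow> mat 1 + s *\<^sub>R (A - mat 1) \<in> Z"
begin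

lemma square_zero_prefix: "A \<in> Z \<Longrightarrow> M ** (A - mat 1) ** (A - mat 1) = 0"
  using square_zero by (simp add: matrix_mult_zero_prefix)

lemma reflection_mem: "A \<in> Z \<Longrightarrow> mat 1 - (A - mat 1) \<in> Z"
  using line_closed[of A "-1"] by simp

lemma inverse:
  assumes "A \<in> Z"
  shows "invertible A" "matrix_inv A = mat 1 - (A - mat 1)"
proof -
  define X where "X = A - mat 1"
  have A: "A = mat 1 + X" by (simp add: X_def)
  have xx: "X ** X = 0" using square_zero assms X_def by simp
  have "A ** (mat 1 - X) = mat 1" "(mat 1 - X) ** A = mat 1"
    unfolding A by (simp_all add: matrix_ring_simps xx)
  then show "invertible A" "matrix_inv A = mat 1 - (A - mat 1)"
    unfolding X_def by (rule matrix_inv_eqI)+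
qed

lemma anticommute:
  assumes a: "A \<in> Z" and b: "B \<in> Z"
  shows "(A - mat 1) ** (B - mat 1) + (B - mat 1) ** (A - mat 1) = 0"
proof -
  define X where "X = A - mat 1"
  define Y where "Y = B - mat 1"
  have prod: "(mat 1 + P) ** (mat 1 + Q) - mat 1 = P + Q + P ** Q" for P Q :: "real^'m^'m"
    by (simp add: matrix_ring_simps)
  have sq: "(P + Q + P ** Q) ** (P + Q + P ** Q) = 0"
    if "mat 1 + P \<in> Z" "mat 1 + Q \<in> Z" for P Q
    using square_zero[OF mult_closed[OF that]] by (simp only: prod)
  have mem: "mat 1 + X \<in> Z" "mat 1 + (- X) \<in> Z" "mat 1 + Y \<in> Z" "mat 1 + (- Y) \<in> Z"
    using a b reflection_mem[OF a] reflection_mem[OF b] by (simp_all add: X_def Y_def)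
  have "X ** Y + Y ** X = 0"
    by (rule square_zero_anticommute)
      (use square_zero[OF a] square_zero[OF b] sq[OF mem(1,3)] sq[OF mem(2,3)]
         sq[OF mem(1,4)] sq[OF mem(2,4)] in \<open>simp_all add: X_def Y_def\<close>)
  then show ?thesis by (simp add: X_def Y_def)
qed

lemma anticommute_prefix:
  assumes "A \<in> Z" "B \<in> Z"
  shows "M ** (B - mat 1) ** (A - mat 1) = - (M ** (A - mat 1) ** (B - mat 1))"
proof -
  have "(B - mat 1) ** (A - mat 1) = - ((A - mat 1) ** (B - mat 1))"
    using anticommute[OF assms] by (simp add: add_eq_0_iff)
  then have "M ** ((B - mat 1) ** (A - mat 1)) = - (M ** ((A - mat 1) ** (B - mat 1)))"
    by (simp add: matrix_minus_right)
  then show ?thesis by (simp only: matrix_mul_assoc)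
qed

text \<open>Anticommutation of the nilpotent
  part of \<open>AB\<close> with that of \<open>C\<close> gives \<open>XYW + WXY = 0\<close>, while moving \<open>W\<close> across \<open>XY\<close>
  by two anticommutations gives \<open>WXY = XYW\<close>.\<close>

lemma triple_product_zero:
  assumes a: "A \<in> Z" and b: "B \<in> Z" and c: "C \<in> Z"
  shows "(A - mat 1) ** (B - mat 1) ** (C - mat 1) = 0"
proof -
  define X where "X = A - mat 1"
  define Y where "Y = B - mat 1"
  define W where "W = C - mat 1"
  have "A ** B - mat 1 = X + Y + X ** Y"
    by (simp add: X_def Y_def matrix_ring_simps)
  then have "(X + Y + X ** Y) ** W + W ** (X + Y + X ** Y) = 0"
    using anticommute[OF mult_closed[OF a b] c] by (simp add: W_def)
  moreover have "X ** W + W ** X = 0" "Y ** W + W ** Y = 0"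
    using anticommute[OF a c] anticommute[OF b c] by (simp_all add: X_def Y_def W_def)
  moreover have "(X + Y + X ** Y) ** W + W ** (X + Y + X ** Y)
      = (X ** W + W ** X) + (Y ** W + W ** Y) + (X ** Y ** W + W ** X ** Y)"
    by (simp add: matrix_ring_simps algebra_simps)
  ultimately have sum: "X ** Y ** W + W ** X ** Y = 0"
    by simp
  have "W ** X = - (X ** W)"
    using anticommute[OF a c] by (simp add: X_def W_def add_eq_0_iff)
  then have "W ** X ** Y = - (X ** W ** Y)" by (simp add: matrix_minus_left)
  also have "X ** W ** Y = - (X ** Y ** W)"
    using anticommute_prefix[OF b c, of X] by (simp add: Y_def W_def)
  finally have "W ** X ** Y = X ** Y ** W" by simp
  then have "X ** Y ** W + X ** Y ** W = 0" using sum by simp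
  then show ?thesis
    unfolding X_def Y_def W_def by (rule matrix_double_eq_0)
qed

lemma commutator_formula:
  assumes a: "A \<in> Z" and b: "B \<in> Z"
  shows "commutator A B = mat 1 + 2 *\<^sub>R ((A - mat 1) ** (B - mat 1))"
proof -
  define X where "X = A - mat 1"
  define Y where "Y = B - mat 1"
  have xx: "X ** X = 0" "M ** X ** X = 0" for M :: "real^'m^'m"
    using square_zero[OF a] square_zero_prefix[OF a] by (simp_all add: X_def)
  have yy: "Y ** Y = 0" "M ** Y ** Y = 0" for M :: "real^'m^'m"
    using square_zero[OF b] square_zero_prefix[OF b] by (simp_all add: Y_def)
  have yx: "Y ** X = - (X ** Y)" "M ** Y ** X = - (M ** X ** Y)" for M :: "real^'m^'m"
    using anticommute[OF a b] anticommute_prefix[OF a b]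
    by (simp_all add: X_def Y_def add_eq_0_iff)
  define U where "U = X + Y"
  define P where "P = X ** Y"
  have "commutator A B = ((mat 1 + X) ** (mat 1 + Y)) ** ((mat 1 - X) ** (mat 1 - Y))"
    using inverse[OF a] inverse[OF b] by (simp add: commutator_def X_def Y_def matrix_mul_assoc)
  also have "\<dots> = (mat 1 + (U + P)) ** (mat 1 - (U - P))"
    by (simp add: U_def P_def matrix_ring_simps algebra_simps)
  also have "\<dots> = mat 1 + 2 *\<^sub>R P"
    by (rule orthogonal_square_zero_product)
      (simp_all add: U_def P_def matrix_ring_simps xx yy yx)
  finally show ?thesis by (simp add: P_def X_def Y_def)
qed

lemma commutator_mem: "A \<in> Z \<Longrightarrow> B \<in> Z \<Longrightarrow> commutator A B \<in> Z"
  unfolding commutator_def using inverse reflection_mem mult_closed by metis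

text \<open>Commutators are central: the commutator of \<open>[A,B] = 1 + 2XY\<close> with \<open>C = 1 + W\<close> is
  \<open>1 + 4XYW = 1\<close>.\<close>

lemma nilpotent_class_le_two: "nilpotent_class_le_two Z"
  unfolding nilpotent_class_le_two_def
proof (intro ballI)
  fix A B C assume a: "A \<in> Z" and b: "B \<in> Z" and c: "C \<in> Z"
  define D where "D = commutator A B"
  have "D - mat 1 = 2 *\<^sub>R ((A - mat 1) ** (B - mat 1))"
    using commutator_formula[OF a b] by (simp add: D_def)
  then have "(D - mat 1) ** (C - mat 1) = 0"
    using triple_product_zero[OF a b c] by (simp flip: scalar_matrix_assoc)
  moreover have "D \<in> Z" using commutator_mem[OF a b] by (simp add: D_def)
  ultimately show "commutator (commutator A B) C = mat 1"
    using commutator_formula[OF _ c] by (simp add: D_def)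
qed

lemma unipotent_group: "unipotent_group Z"
  unfolding unipotent_group_def unipotent_matrix_def
proof
  fix A assume "A \<in> Z"
  then have "(((**) (A - mat 1)) ^^ 2) (mat 1) = 0"
    using square_zero by (simp add: numeral_2_eq_2)
  then show "\<exists>k. (((**) (A - mat 1)) ^^ k) (mat 1) = 0" by blast
qed

lemma one_mem: "Z \<noteq> {} \<Longrightarrow> mat 1 \<in> Z"
  using line_closed[of _ 0] by auto

lemma matrix_subgroup:
  assumes "Z \<subseteq> H" "Z \<noteq> {}"
  shows "matrix_subgroup Z H"
  unfolding matrix_subgroup_def using assms one_mem mult_closed inverse reflection_mem by auto

text \<open>The family is star-shaped around the identity, hence connected.\<close>

lemma connected: "connected Z"
proof -
  have segment: "closed_segment (mat 1) A \<subseteq> Z" if "A \<in> Z" for A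
  proof
    fix M assume "M \<in> closed_segment (mat 1) A"
    then obtain u where "M = (1 - u) *\<^sub>R mat 1 + u *\<^sub>R A"
      by (auto simp: closed_segment_def)
    then have "M = mat 1 + u *\<^sub>R (A - mat 1)" by (simp add: algebra_simps)
    then show "M \<in> Z" using line_closed that by simp
  qed
  then have "Z = (\<Union>A\<in>Z. closed_segment (mat 1) A)" by auto
  moreover have "connected (\<Union>A\<in>Z. closed_segment (mat 1) A)"
    by (rule connected_Union) auto
  ultimately show ?thesis by simp
qed

end

lemma sum_UNIV_option:
  "(\<Sum>i\<in>(UNIV::'a::finite option set). f i) = f None + (\<Sum>i\<in>UNIV. f (Some i))"
  by (simp add: UNIV_option_conv sum.reindex)

lemma aff_apply_aff_mat: "aff_apply (aff_mat g t) x = g *v x + t"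
  by (simp add: vec_eq_iff aff_apply_def aff_mat_def matrix_vector_mult_def)

lemma aff_mat_inj:
  assumes "aff_mat g t = aff_mat g' t'"
  shows "g = g'" "t = t'"
proof -
  have "aff_mat g t $ Some a $ Some b = aff_mat g' t' $ Some a $ Some b"
    and "aff_mat g t $ Some a $ None = aff_mat g' t' $ Some a $ None" for a b
    using assms by simp_all
  then show "g = g'" "t = t'" by (simp_all add: aff_mat_def vec_eq_iff)
qed

lemma mat_one_aff_mat: "(mat 1 :: real^('n::finite option)^('n option)) = aff_mat (mat 1) 0"
  by (auto simp: vec_eq_iff aff_mat_def mat_def split: option.splits)

lemma aff_mat_mult: "aff_mat g t ** aff_mat g' t' = aff_mat (g ** g') (g *v t' + t)"
  by (auto simp: vec_eq_iff aff_mat_def matrix_matrix_mult_def matrix_vector_mult_def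
      sum_UNIV_option split: option.splits)

lemma aff_mat_line:
  "mat 1 + s *\<^sub>R (aff_mat h c - mat 1) = aff_mat (mat 1 + s *\<^sub>R (h - mat 1)) (s *\<^sub>R c)"
  by (auto simp: vec_eq_iff aff_mat_def mat_def split: option.splits)

lemma aff_mat_square_zero:
  assumes "(h - mat 1) ** (h - mat 1) = 0" "(h - mat 1) *v c = 0"
  shows "(aff_mat h c - mat 1) ** (aff_mat h c - mat 1) = (0::real^('n::finite option)^('n option))"
proof -
  define M where "M = aff_mat h c - (mat 1 :: real^('n option)^('n option))"
  define N where "N = h - mat 1"
  have M: "M $ Some a $ Some b = N $ a $ b" "M $ Some a $ None = c $ a" "M $ None $ j = 0"
    for a b j by (simp_all add: M_def N_def aff_mat_def mat_def split: option.splits)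
  have "(M ** M) $ i $ j = 0" for i j
    using assms unfolding N_def[symmetric]
    by (cases i; cases j)
       (simp_all add: matrix_matrix_mult_def matrix_vector_mult_def sum_UNIV_option M vec_eq_iff)
  then show ?thesis unfolding M_def[symmetric] by (simp add: vec_eq_iff)
qed

lemma E_group_aff_mat_iff: "aff_mat g t \<in> E_group S \<longleftrightarrow> g \<in> orth_group S"
  unfolding E_group_def by (auto dest: aff_mat_inj)

definition pinner :: "real^'n^'n \<Rightarrow> real^'n \<Rightarrow> real^'n \<Rightarrow> real" where
  "pinner S u w = u \<bullet> (S *v w)"

lemma pinner_sym: "transpose S = S \<Longrightarrow> pinner S u w = pinner S w u"
proof -
  assume "transpose S = S"
  then have "u v* S = S *v u" using transpose_matrix_vector[of S u] by simp
  moreover have "u \<bullet> (S *v w) = (u v* S) \<bullet> w" by (simp add: dot_lmul_matrix)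
  ultimately show ?thesis by (simp add: pinner_def inner_commute)
qed

lemma pinner_simps:
  "pinner S (a + b) w = pinner S a w + pinner S b w"
  "pinner S u (a + b) = pinner S u a + pinner S u b"
  "pinner S (a - b) w = pinner S a w - pinner S b w"
  "pinner S u (a - b) = pinner S u a - pinner S u b"
  "pinner S (k *\<^sub>R a) w = k * pinner S a w"
  "pinner S u (k *\<^sub>R b) = k * pinner S u b"
  by (simp_all add: pinner_def inner_add_left inner_add_right inner_diff_left inner_diff_right
      matrix_vector_right_distrib matrix_vector_mult_diff_distrib matrix_vector_mult_scaleR)

lemma pinner_nondegenerate:
  assumes "invertible S" "\<And>u. pinner S u z = 0"
  shows "z = 0"
proof -
  have "(S *v z) \<bullet> (S *v z) = 0" using assms(2)[of "S *v z"] by (simp add: pinner_def)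
  then have "S *v z = 0" by simp
  then show ?thesis
    using inj_matrix_vector_mult[OF assms(1)] by (metis injD matrix_vector_mult_0_right)
qed

lemma orth_group_pinner: "g \<in> orth_group S \<Longrightarrow> pinner S (g *v u) (g *v w) = pinner S u w"
proof -
  assume "g \<in> orth_group S"
  then have orth: "transpose g ** S ** g = S" by (simp add: orth_group_def)
  have "pinner S (g *v u) (g *v w) = (u v* transpose g) \<bullet> (S *v (g *v w))"
    by (simp add: pinner_def)
  also have "\<dots> = u \<bullet> (transpose g *v (S *v (g *v w)))" by (rule dot_lmul_matrix)
  also have "\<dots> = u \<bullet> ((transpose g ** S ** g) *v w)"
    by (simp add: matrix_vector_mul_assoc matrix_mul_assoc)
  finally show ?thesis using orth by (simp add: pinner_def)
qed

lemma orth_groupI: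
  assumes "\<And>u w. pinner S (g *v u) (g *v w) = pinner S u w"
  shows "g \<in> orth_group S"
proof -
  have "u \<bullet> ((transpose g ** S ** g) *v w) = u \<bullet> (S *v w)" for u w
  proof -
    have "u \<bullet> ((transpose g ** S ** g) *v w) = u \<bullet> (transpose g *v (S *v (g *v w)))"
      by (simp add: matrix_vector_mul_assoc matrix_mul_assoc)
    also have "\<dots> = (u v* transpose g) \<bullet> (S *v (g *v w))" by (rule dot_lmul_matrix[symmetric])
    also have "\<dots> = pinner S (g *v u) (g *v w)" by (simp only: pinner_def vector_transpose_matrix)
    finally show ?thesis using assms by (simp add: pinner_def)
  qed
  then have "d \<bullet> d = 0" if "d = (transpose g ** S ** g) *v w - S *v w" for d w
    using that by (simp add: inner_diff_left inner_diff_right)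
  then have "(transpose g ** S ** g) *v w = S *v w" for w by simp
  then show ?thesis by (simp add: orth_group_def matrix_eq)
qed

lemma orth_group_mult: "g \<in> orth_group S \<Longrightarrow> g' \<in> orth_group S \<Longrightarrow> g ** g' \<in> orth_group S"
  by (rule orth_groupI) (simp add: orth_group_pinner matrix_vector_mul_assoc[symmetric])

lemma pinner_constant_on_line:
  assumes sym: "transpose S = S" and s: "s \<noteq> 0"
    and plus: "pinner S (a + s *\<^sub>R b) (a + s *\<^sub>R b) = pinner S a a"
    and minus: "pinner S (a - s *\<^sub>R b) (a - s *\<^sub>R b) = pinner S a a"
  shows "pinner S b b = 0" "pinner S a b = 0"
proof -
  have ba: "pinner S b a = pinner S a b" using pinner_sym[OF sym] .
  have p: "2 * s * pinner S a b + s * (s * pinner S b b) = 0"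
    using plus by (simp add: pinner_simps ba algebra_simps)
  have m: "- 2 * s * pinner S a b + s * (s * pinner S b b) = 0"
    using minus by (simp add: pinner_simps ba algebra_simps)
  have "s * (s * pinner S b b) = 0" using p m by linarith
  then show bb: "pinner S b b = 0" using s by simp
  show "pinner S a b = 0" using p bb s by simp
qed

text \<open>If the image of \<open>N\<close> is isotropic, it is totally isotropic (polarisation).\<close>

lemma isotropic_image_polarize:
  assumes sym: "transpose S = S" and iso: "\<And>v. pinner S (N *v v) (N *v v) = 0"
  shows "pinner S (N *v v) (N *v w) = 0"
proof -
  have "pinner S (N *v (v + w)) (N *v (v + w)) = 0" by (rule iso)
  then have "pinner S (N *v v) (N *v w) + pinner S (N *v w) (N *v v) = 0"
    using iso[of v] iso[of w] by (simp add: matrix_vector_right_distrib pinner_simps)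
  then have "pinner S (N *v v) (N *v w) + pinner S (N *v v) (N *v w) = 0"
    using pinner_sym[OF sym] by metis
  then show ?thesis by simp
qed

text \<open>For an isometry \<open>h = 1 + N\<close> with totally isotropic image of \<open>N\<close>, the expansion of
  \<open>\<langle>hu, hw\<rangle> = \<langle>u, w\<rangle>\<close> shows that \<open>N\<close> is skew.\<close>

lemma orth_isotropic_skew:
  assumes h: "h \<in> orth_group S"
    and iso: "\<And>v w. pinner S ((h - mat 1) *v v) ((h - mat 1) *v w) = 0"
  shows "pinner S u ((h - mat 1) *v w) + pinner S ((h - mat 1) *v u) w = 0"
proof -
  define N where "N = h - mat 1"
  have "h *v y = y + N *v y" for y by (simp add: N_def matrix_vector_mult_diff_rdistrib)
  then show ?thesis
    using orth_group_pinner[OF h, of u w] iso[of u w]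
    by (simp add: N_def[symmetric] pinner_simps)
qed

lemma skew_isotropic_square_zero:
  assumes S: "invertible S"
    and skew: "\<And>u w. pinner S u (N *v w) + pinner S (N *v u) w = 0"
    and iso: "\<And>v w. pinner S (N *v v) (N *v w) = 0"
  shows "N ** N = 0"
proof -
  have "N *v (N *v v) = 0" for v
    by (rule pinner_nondegenerate[OF S]) (use skew[of _ "N *v v"] iso in simp)
  then show ?thesis by (simp add: matrix_eq matrix_vector_mul_assoc)
qed

lemma skew_isotropic_line_orth:
  assumes skew: "\<And>u w. pinner S u (N *v w) + pinner S (N *v u) w = 0"
    and iso: "\<And>v w. pinner S (N *v v) (N *v w) = 0"
  shows "mat 1 + s *\<^sub>R N \<in> orth_group S"
proof (rule orth_groupI)
  fix u w
  have line: "(mat 1 + s *\<^sub>R N) *v y = y + s *\<^sub>R (N *v y)" for y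
    by (simp add: matrix_vector_mult_add_rdistrib scaleR_matrix_vector_assoc)
  have "pinner S u (N *v w) + pinner S (N *v u) w = 0" by (rule skew)
  then show "pinner S ((mat 1 + s *\<^sub>R N) *v u) ((mat 1 + s *\<^sub>R N) *v w) = pinner S u w"
    unfolding line using iso[of u w]
    by (simp add: pinner_simps algebra_simps) (metis distrib_left mult_zero_right)
qed

text \<open>If the quadratic function \<open>y \<mapsto> \<langle>Ny + c, Ny + c\<rangle>\<^sub>S\<close> is constant near \<open>x\<^sub>0\<close>, then
  the image of \<open>N\<close> is isotropic and orthogonal to \<open>Nx\<^sub>0 + c\<close>: compare the values at
  \<open>x\<^sub>0 \<plusminus> sv\<close> for small \<open>s > 0\<close>.\<close>

lemma quadratic_locally_constant:
  assumes sym: "transpose S = S" and e: "e > 0"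
    and const: "\<And>y. y \<in> ball x0 e \<Longrightarrow>
      pinner S (N *v y + c) (N *v y + c) = pinner S (N *v x0 + c) (N *v x0 + c)"
  shows "pinner S (N *v v) (N *v v) = 0" "pinner S (N *v x0 + c) (N *v v) = 0"
proof -
  define s where "s = e / (norm v + 1)"
  have pos: "norm v + 1 > 0" by (simp add: add_nonneg_pos)
  then have s: "s > 0" using e by (simp add: s_def)
  have "s * (norm v + 1) = e" using pos by (simp add: s_def)
  then have "s * norm v < e" using s by (simp add: algebra_simps)
  then have in_ball: "x0 + s *\<^sub>R v \<in> ball x0 e" "x0 - s *\<^sub>R v \<in> ball x0 e"
    using s by (simp_all add: dist_norm)
  have disp: "N *v (x0 + s *\<^sub>R v) + c = (N *v x0 + c) + s *\<^sub>R (N *v v)"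
    "N *v (x0 - s *\<^sub>R v) + c = (N *v x0 + c) - s *\<^sub>R (N *v v)"
    by (simp_all add: algebra_simps)
  have on_line: "pinner S ((N *v x0 + c) + s *\<^sub>R (N *v v)) ((N *v x0 + c) + s *\<^sub>R (N *v v))
      = pinner S (N *v x0 + c) (N *v x0 + c)"
    "pinner S ((N *v x0 + c) - s *\<^sub>R (N *v v)) ((N *v x0 + c) - s *\<^sub>R (N *v v))
      = pinner S (N *v x0 + c) (N *v x0 + c)"
    using const[OF in_ball(1)] const[OF in_ball(2)] by (simp_all only: disp)
  have "s \<noteq> 0" using s by simp
  from pinner_constant_on_line[OF sym this on_line]
  show "pinner S (N *v v) (N *v v) = 0" "pinner S (N *v x0 + c) (N *v v) = 0" .
qed

lemma commuting_displacement:
  assumes "aff_mat h c ** aff_mat g t = aff_mat g t ** aff_mat h c"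
  shows "(h - mat 1) *v (g *v y + t) + c = g *v ((h - mat 1) *v y + c)"
proof -
  have hg: "h ** g = g ** h" and ht: "h *v t + c = g *v c + t"
    using assms aff_mat_inj by (simp_all add: aff_mat_mult)
  have "(h - mat 1) *v (g *v y + t) + c = h *v (g *v y) + (h *v t + c) - (g *v y + t)"
    by (simp add: matrix_vector_mult_diff_rdistrib matrix_vector_right_distrib)
  also have "\<dots> = (g ** h) *v y + (g *v c + t) - (g *v y + t)"
    by (simp only: matrix_vector_mul_assoc hg ht)
  also have "\<dots> = g *v ((h - mat 1) *v y + c)"
    by (simp add: matrix_vector_mult_diff_rdistrib matrix_vector_right_distrib
        matrix_vector_mult_diff_distrib matrix_vector_mul_assoc)
  finally show ?thesis .
qed

lemma centralising_isometry:
  assumes S: "pseudo_scalar_product S" and GE: "G \<subseteq> E_group S" and one: "mat 1 \<in> G"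
    and orbit: "open ((\<lambda>B. aff_apply B x0) ` G)"
    and h: "h \<in> orth_group S"
    and comm: "\<And>B. B \<in> G \<Longrightarrow> aff_mat h c ** B = B ** aff_mat h c"
  shows "(h - mat 1) ** (h - mat 1) = 0" "(h - mat 1) *v c = 0"
    "mat 1 + s *\<^sub>R (h - mat 1) \<in> orth_group S"
proof -
  have sym: "transpose S = S" and inv: "invertible S"
    using S by (auto simp: pseudo_scalar_product_def)
  define N where "N = h - mat 1"
  define Q where "Q y = pinner S (N *v y + c) (N *v y + c)" for y
  have orbit_const: "Q (aff_apply B x0) = Q x0" if BG: "B \<in> G" for B
  proof -
    obtain g t where B: "B = aff_mat g t" and g: "g \<in> orth_group S"
      using BG GE by (auto simp: E_group_def)
    show ?thesis
      using commuting_displacement[OF comm[OF BG, unfolded B]] orth_group_pinner[OF g]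
      by (simp add: Q_def N_def B aff_apply_aff_mat)
  qed
  have "x0 \<in> (\<lambda>B. aff_apply B x0) ` G"
    using one by (force simp: mat_one_aff_mat aff_apply_aff_mat)
  then obtain e where e: "e > 0" "ball x0 e \<subseteq> (\<lambda>B. aff_apply B x0) ` G"
    using orbit open_contains_ball by blast
  then have "y \<in> ball x0 e \<Longrightarrow> Q y = Q x0" for y using orbit_const by blast
  note near = quadratic_locally_constant[OF sym e(1) this[unfolded Q_def]]
  have iso: "pinner S (N *v v) (N *v w) = 0" for v w
    using isotropic_image_polarize[OF sym near(1)] .
  have skew: "pinner S u (N *v w) + pinner S (N *v u) w = 0" for u w
    using orth_isotropic_skew[OF h] iso by (simp add: N_def)
  show "(h - mat 1) ** (h - mat 1) = 0"
    using skew_isotropic_square_zero[OF inv skew iso] by (simp add: N_def)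
  show "mat 1 + s *\<^sub>R (h - mat 1) \<in> orth_group S"
    using skew_isotropic_line_orth[OF skew iso] by (simp add: N_def)
  have "pinner S u (N *v c) = 0" for u
  proof -
    have "pinner S (N *v c) u = 0"
      using near(2)[of u] iso[of x0 u] skew[of c u] pinner_sym[OF sym, of "N *v x0 + c"]
      by (simp add: pinner_simps)
    then show ?thesis using pinner_sym[OF sym] by metis
  qed
  then show "(h - mat 1) *v c = 0"
    using pinner_nondegenerate[OF inv] by (simp add: N_def)
qed

lemma E_group_mult:
  assumes "A \<in> E_group S" "B \<in> E_group S"
  shows "A ** B \<in> E_group S"
proof -
  obtain g t g' t' where "A = aff_mat g t" "B = aff_mat g' t'"
    and "g \<in> orth_group S" "g' \<in> orth_group S"
    using assms by (auto simp: E_group_def)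
  then show ?thesis by (simp add: aff_mat_mult E_group_aff_mat_iff orth_group_mult)
qed

lemma mat_one_E_group:
  fixes S :: "real^'n::finite^'n"
  shows "mat 1 \<in> E_group S"
proof -
  have "(mat 1 :: real^'n^'n) \<in> orth_group S" by (simp add: orth_group_def)
  then show ?thesis unfolding mat_one_aff_mat E_group_aff_mat_iff .
qed

lemma centraliser_mult:
  fixes H :: "(real^'m^'m) set"
  assumes H: "\<And>A B. A \<in> H \<Longrightarrow> B \<in> H \<Longrightarrow> A ** B \<in> H"
    and "A \<in> centraliser G H" "A' \<in> centraliser G H"
  shows "A ** A' \<in> centraliser G H"
proof -
  have "A ** A' ** B = B ** (A ** A')" if "B \<in> G" for B
  proof -
    have "A ** A' ** B = A ** (B ** A')"
      using assms(3) that by (auto simp: centraliser_def simp flip: matrix_mul_assoc)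
    also have "\<dots> = B ** (A ** A')"
      using assms(2) that by (auto simp: centraliser_def matrix_mul_assoc)
    finally show ?thesis .
  qed
  then show ?thesis using assms by (auto simp: centraliser_def)
qed

lemma commute_line:
  fixes A B :: "real^'m^'m"
  assumes "A ** B = B ** A"
  shows "(mat 1 + s *\<^sub>R (A - mat 1)) ** B = B ** (mat 1 + s *\<^sub>R (A - mat 1))"
proof -
  have "(mat 1 + s *\<^sub>R (A - mat 1)) ** B = B + s *\<^sub>R (A ** B - B)"
    by (simp add: matrix_add_rdistrib scalar_matrix_assoc[symmetric] matrix_diff_rdistrib)
  also have "\<dots> = B + s *\<^sub>R (B ** A - B)" using assms by simp
  also have "\<dots> = B ** (mat 1 + s *\<^sub>R (A - mat 1))"
    by (simp add: matrix_add_ldistrib matrix_scalar_ac matrix_diff_ldistrib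
        scalar_matrix_assoc[symmetric] scaleR_right_diff_distrib)
  finally show ?thesis .
qed

lemma centraliser_square_zero_family:
  assumes S: "pseudo_scalar_product S" and GE: "G \<subseteq> E_group S" and one: "mat 1 \<in> G"
    and orbit: "open ((\<lambda>B. aff_apply B x0) ` G)"
  shows "square_zero_family (centraliser G (E_group S))"
proof
  fix A assume A: "A \<in> centraliser G (E_group S)"
  then obtain h c where hc: "A = aff_mat h c" "h \<in> orth_group S"
    and comm: "\<And>B. B \<in> G \<Longrightarrow> A ** B = B ** A"
    by (auto simp: centraliser_def E_group_def)
  note iso = centralising_isometry[OF S GE one orbit hc(2) comm[unfolded hc(1)]]
  show "(A - mat 1) ** (A - mat 1) = 0"
    using aff_mat_square_zero[OF iso(1,2)] by (simp add: hc(1))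
  fix s :: real
  have "mat 1 + s *\<^sub>R (A - mat 1) \<in> E_group S"
    using iso(3) by (simp add: hc(1) aff_mat_line E_group_aff_mat_iff)
  then show "mat 1 + s *\<^sub>R (A - mat 1) \<in> centraliser G (E_group S)"
    using comm commute_line by (auto simp: centraliser_def)
next
  fix A B assume "A \<in> centraliser G (E_group S)" "B \<in> centraliser G (E_group S)"
  then show "A ** B \<in> centraliser G (E_group S)"
    using centraliser_mult[of "E_group S"] E_group_mult by blast
qed

theorem mainTheorem20:
  fixes S :: "real^'n^'n" and U :: "(real^'n) set"
    and G :: "(real^('n option)^('n option)) set"
  assumes "pseudo_scalar_product S"
    and "PR_affine_homogeneous_domain S U"
    and "matrix_subgroup G (Isom S U)"
    and "has_open_orbit G"
  shows "connected (centraliser G (E_group S))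
    \<and> matrix_subgroup (centraliser G (E_group S)) (E_group S)
    \<and> unipotent_group (centraliser G (E_group S))
    \<and> nilpotent_class_le_two (centraliser G (E_group S))
    \<and> (\<forall>A\<in>centraliser G (E_group S). (A - mat 1) ** (A - mat 1) = 0)"
proof -
  have GE: "G \<subseteq> E_group S" and one: "mat 1 \<in> G"
    using assms(3) by (auto simp: matrix_subgroup_def Isom_def)
  obtain x0 :: "real^'n" where orbit: "open ((\<lambda>B. aff_apply B x0) ` G)"
    using assms(4) by (auto simp: has_open_orbit_def)
  interpret Z: square_zero_family "centraliser G (E_group S)"
    by (rule centraliser_square_zero_family[OF assms(1) GE one orbit])
  have "mat 1 \<in> centraliser G (E_group S)"
    using mat_one_E_group by (simp add: centraliser_def)
  then have "matrix_subgroup (centraliser G (E_group S)) (E_group S)"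
    by (intro Z.matrix_subgroup) (auto simp: centraliser_def)
  then show ?thesis
    using Z.connected Z.unipotent_group Z.nilpotent_class_le_two Z.square_zero by blast
qed

end
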